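(* Let $(R,\mathfrak m,k)$ be a one-dimensional analytically irreducible local domain with canonical map $k\to\overline R/\mathfrak n$ an isomorphism, with $v,a_i,n,I_i,\mathcal T(R),\mathcal I(R)$ as in the context. Let $n\ge 4$ and assume there exists $1\le i\le n-3$ such that $I_iI_{i+2}\ne qI_{i+2}$ for some (equivalently, any) $q\in R$ with $v(q)=a_i$. Then: (1) $\mathcal I(R)\subsetneq\mathcal T(R)$; (2) if $k$ is infinite, then $\mathcal T(R)$ is an infinite set.
   Context: $\overline R$ is the integral closure of $R$ in $Q(R)$, assumed finitely generated over $R$ and local with maximal ideal $\mathfrak n$; $v$ is the normalized valuation of $\overline R$; $v(R)=\{a_0=0<a_1<\cdots\}$; $n$ is the smallest integer with $a_{n+j}=a_n+j$ for all $j\ge 0$; $I_j=\{r\in R\mid v(r)\ge a_j\}$ for $0\le j\le n$; $\mathcal I(R)=\{I_0,\dots,I_n\}$. $\mathcal T(R)$ is the set of nonzero trace ideals of $R$ (ideals of the form $\sum_{f\in\mathrm{Hom}_R(M,R)}\mathrm{Im}f$). *)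

theory Defs
  imports "HOL-Algebra.Module" "HOL-Computational_Algebra.Polynomial" "HOL-Library.Infinite_Set"
begin

text \<open>Throughout, the ring R is a subring (given as a carrier set) of an ambient field
  of type 'a, which will be its field of fractions Q(R).\<close>

definition subring_of :: "'a::field set \<Rightarrow> bool" where
  "subring_of R \<longleftrightarrow> 0 \<in> R \<and> 1 \<in> R \<and> (\<forall>x\<in>R. \<forall>y\<in>R. x + y \<in> R \<and> x - y \<in> R \<and> x * y \<in> R)"

definition is_ideal :: "'a::field set \<Rightarrow> 'a set \<Rightarrow> bool" where
  "is_ideal R I \<longleftrightarrow> I \<subseteq> R \<and> 0 \<in> I \<and> (\<forall>x\<in>I. \<forall>y\<in>I. x + y \<in> I) \<and> (\<forall>r\<in>R. \<forall>x\<in>I. r * x \<in> I)"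

definition ideal_gen :: "'a::field set \<Rightarrow> 'a set \<Rightarrow> 'a set" where
  "ideal_gen R S = \<Inter>{I. is_ideal R I \<and> S \<subseteq> I}"

definition ideal_prod :: "'a::field set \<Rightarrow> 'a set \<Rightarrow> 'a set \<Rightarrow> 'a set" where
  "ideal_prod R I J = ideal_gen R {a * b |a b. a \<in> I \<and> b \<in> J}"

primrec ideal_pow :: "'a::field set \<Rightarrow> 'a set \<Rightarrow> nat \<Rightarrow> 'a set" where
  "ideal_pow R I 0 = R"
| "ideal_pow R I (Suc k) = ideal_prod R I (ideal_pow R I k)"

definition noetherian :: "'a::field set \<Rightarrow> bool" where
  "noetherian R \<longleftrightarrow> (\<forall>I. is_ideal R I \<longrightarrow> (\<exists>F. finite F \<and> F \<subseteq> I \<and> I = ideal_gen R F))"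

definition maximal_ideal :: "'a::field set \<Rightarrow> 'a set \<Rightarrow> bool" where
  "maximal_ideal R m \<longleftrightarrow> is_ideal R m \<and> m \<noteq> R \<and>
     (\<forall>J. is_ideal R J \<and> m \<subseteq> J \<longrightarrow> J = m \<or> J = R)"

definition local_ring :: "'a::field set \<Rightarrow> 'a set \<Rightarrow> bool" where
  "local_ring R m \<longleftrightarrow> maximal_ideal R m \<and> (\<forall>J. maximal_ideal R J \<longrightarrow> J = m)"

definition prime_ideal :: "'a::field set \<Rightarrow> 'a set \<Rightarrow> bool" where
  "prime_ideal R P \<longleftrightarrow> is_ideal R P \<and> P \<noteq> R \<and> (\<forall>x\<in>R. \<forall>y\<in>R. x * y \<in> P \<longrightarrow> x \<in> P \<or> y \<in> P)"

definition prime_chain :: "'a::field set \<Rightarrow> nat \<Rightarrow> (nat \<Rightarrow> 'a set) \<Rightarrow> bool" where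
  "prime_chain R d P \<longleftrightarrow> (\<forall>i\<le>d. prime_ideal R (P i)) \<and> (\<forall>i<d. P i \<subset> P (Suc i))"

definition krull_dim_eq :: "'a::field set \<Rightarrow> nat \<Rightarrow> bool" where
  "krull_dim_eq R d \<longleftrightarrow> (\<exists>P. prime_chain R d P) \<and> \<not> (\<exists>P. prime_chain R (Suc d) P)"

definition is_fraction_field_of :: "'a::field set \<Rightarrow> bool" where
  "is_fraction_field_of R \<longleftrightarrow> (\<forall>x. \<exists>a\<in>R. \<exists>b\<in>R. b \<noteq> 0 \<and> x = a / b)"

definition integral_over :: "'a::field set \<Rightarrow> 'a \<Rightarrow> bool" where
  "integral_over R x \<longleftrightarrow> (\<exists>p. lead_coeff p = 1 \<and> (\<forall>i. coeff p i \<in> R) \<and> poly p x = 0)"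

definition integral_closure :: "'a::field set \<Rightarrow> 'a set" where
  "integral_closure R = {x. integral_over R x}"

definition fin_gen_module :: "'a::field set \<Rightarrow> 'a set \<Rightarrow> bool" where
  "fin_gen_module R B \<longleftrightarrow> (\<exists>F. finite F \<and> F \<subseteq> B \<and> B = {(\<Sum>f\<in>F. c f * f) |c. \<forall>f\<in>F. c f \<in> R})"

text \<open>The m-adic completion of R is a domain (R analytically irreducible):
  if the product of two m-adic Cauchy sequences is m-adically null, one of them is null.\<close>
definition adic_cauchy :: "'a::field set \<Rightarrow> 'a set \<Rightarrow> (nat \<Rightarrow> 'a) \<Rightarrow> bool" where
  "adic_cauchy R m x \<longleftrightarrow> (\<forall>i. x i \<in> R) \<and>
     (\<forall>k. \<exists>N. \<forall>p\<ge>N. \<forall>q\<ge>N. x p - x q \<in> ideal_pow R m k)"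

definition adic_null :: "'a::field set \<Rightarrow> 'a set \<Rightarrow> (nat \<Rightarrow> 'a) \<Rightarrow> bool" where
  "adic_null R m x \<longleftrightarrow> (\<forall>k. \<exists>N. \<forall>p\<ge>N. x p \<in> ideal_pow R m k)"

definition analytically_irreducible :: "'a::field set \<Rightarrow> 'a set \<Rightarrow> bool" where
  "analytically_irreducible R m \<longleftrightarrow>
     (\<forall>x y. adic_cauchy R m x \<and> adic_cauchy R m y \<and> adic_null R m (\<lambda>i. x i * y i)
        \<longrightarrow> adic_null R m x \<or> adic_null R m y)"

text \<open>The canonical map k = R/m \<rightarrow> Rbar/n, r + m \<mapsto> r + n, is a well-defined
  isomorphism (well-defined and injective: m = n \<inter> R; surjective: Rbar = R + n).\<close>
definition residue_map_iso :: "'a::field set \<Rightarrow> 'a set \<Rightarrow> 'a set \<Rightarrow> 'a set \<Rightarrow> bool" where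
  "residue_map_iso R m B n \<longleftrightarrow> (\<forall>r\<in>R. r \<in> m \<longleftrightarrow> r \<in> n) \<and> (\<forall>x\<in>B. \<exists>r\<in>R. x - r \<in> n)"

definition normalized_valuation :: "'a::field set \<Rightarrow> ('a \<Rightarrow> int) \<Rightarrow> bool" where
  "normalized_valuation B v \<longleftrightarrow>
     (\<forall>x y. x \<noteq> 0 \<and> y \<noteq> 0 \<longrightarrow> v (x * y) = v x + v y) \<and>
     (\<forall>x y. x \<noteq> 0 \<and> y \<noteq> 0 \<and> x + y \<noteq> 0 \<longrightarrow> v (x + y) \<ge> min (v x) (v y)) \<and>
     (\<forall>k. \<exists>x. x \<noteq> 0 \<and> v x = k) \<and>
     (\<forall>x. x \<in> B \<longleftrightarrow> x = 0 \<or> v x \<ge> 0)"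

definition value_set :: "'a::field set \<Rightarrow> ('a \<Rightarrow> int) \<Rightarrow> nat set" where
  "value_set R v = {nat (v r) |r. r \<in> R \<and> r \<noteq> 0}"

definition aseq :: "'a::field set \<Rightarrow> ('a \<Rightarrow> int) \<Rightarrow> nat \<Rightarrow> nat" where
  "aseq R v i = enumerate (value_set R v) i"

definition n_index :: "'a::field set \<Rightarrow> ('a \<Rightarrow> int) \<Rightarrow> nat" where
  "n_index R v = (LEAST n. \<forall>j. aseq R v (n + j) = aseq R v n + j)"

definition Iv :: "'a::field set \<Rightarrow> ('a \<Rightarrow> int) \<Rightarrow> nat \<Rightarrow> 'a set" where
  "Iv R v j = {r \<in> R. r = 0 \<or> v r \<ge> int (aseq R v j)}"

definition I_family :: "'a::field set \<Rightarrow> ('a \<Rightarrow> int) \<Rightarrow> 'a set set" where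
  "I_family R v = {Iv R v j |j. j \<le> n_index R v}"

text \<open>R as a HOL-Algebra ring record, so that R-modules are HOL-Algebra modules.\<close>
definition ring_of :: "'a::field set \<Rightarrow> 'a ring" where
  "ring_of R = \<lparr>carrier = R, monoid.mult = (*), one = 1, zero = 0, add = (+)\<rparr>"

definition Hom_to_R :: "'a::field set \<Rightarrow> ('a, 'm) module \<Rightarrow> ('m \<Rightarrow> 'a) set" where
  "Hom_to_R R M = {f. (\<forall>x\<in>carrier M. f x \<in> R) \<and>
      (\<forall>x\<in>carrier M. \<forall>y\<in>carrier M. f (x \<oplus>\<^bsub>M\<^esub> y) = f x + f y) \<and>
      (\<forall>a\<in>R. \<forall>x\<in>carrier M. f (a \<odot>\<^bsub>M\<^esub> x) = a * f x)}"

text \<open>Trace ideal of M: the sum (= ideal generated by the union) of all images.\<close>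
definition trace_of :: "'a::field set \<Rightarrow> ('a, 'm) module \<Rightarrow> 'a set" where
  "trace_of R M = ideal_gen R (\<Union>f\<in>Hom_to_R R M. f ` carrier M)"

text \<open>Nonzero trace ideals. The module M ranges over R-modules whose elements live in
  the fixed type 'a set \<Rightarrow> 'a (large enough).\<close>
definition trace_ideals :: "'a::field set \<Rightarrow> 'a set set" where
  "trace_ideals R = {I. I \<noteq> {0} \<and>
      (\<exists>M :: ('a, 'a set \<Rightarrow> 'a) module. Module.module (ring_of R) M \<and> I = trace_of R M)}"

definition residue_field :: "'a::field set \<Rightarrow> 'a set \<Rightarrow> 'a set set" where
  "residue_field R m = (\<lambda>r. (\<lambda>x. r + x) ` m) ` R"

end

theory Submission
  imports Defs
begin

text \<open>Let \<open>c = a\<^sub>n\<close>; by minimality of \<open>n\<close>, \<open>c - 1 \<notin> v(R)\<close>. Hence if an ideal \<open>K\<close> contains all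
  elements of value \<open>\<ge> c\<close> and \<open>z K \<subseteq> R\<close>, then \<open>v z \<ge> 0\<close>; when moreover every such \<open>z\<close>
  satisfies \<open>z K \<subseteq> K\<close>, the ideal \<open>K\<close> is its own trace. This applies to every \<open>I\<^sub>j\<close>.

  Call \<open>u\<close> of value \<open>a\<^sub>j\<close> liftable if some \<open>z\<close> of value \<open>a\<^sub>j\<^sub>+\<^sub>1 - a\<^sub>j\<close> has \<open>z u \<in> R\<close> and
  \<open>z I\<^sub>j\<^sub>+\<^sub>2 \<subseteq> R\<close>. For non-liftable \<open>u\<close>, the ideal \<open>R u + I\<^sub>j\<^sub>+\<^sub>2\<close> is a trace ideal (write
  \<open>z = \<alpha> + e\<close> with \<open>\<alpha> \<in> R\<close>, \<open>v e \<ge> 1\<close>) containing no element of value \<open>a\<^sub>j\<^sub>+\<^sub>1\<close>, so it is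
  none of the \<open>I\<^sub>l\<close>. A non-liftable \<open>u\<close> exists: otherwise lifting \<open>q\<close> step by step and
  descending from the conductor would give \<open>I\<^sub>i I\<^sub>i\<^sub>+\<^sub>2 = q I\<^sub>i\<^sub>+\<^sub>2\<close>. Finally non-liftability
  survives \<open>u \<mapsto> u + \<mu> w\<close> for \<open>v w = a\<^sub>j\<^sub>+\<^sub>1\<close> and \<open>\<mu> \<in> R\<close>, and the trace ideals
  \<open>R (u + \<mu> w) + I\<^sub>j\<^sub>+\<^sub>2\<close> determine \<open>\<mu>\<close> modulo \<open>m\<close>, so an infinite residue field yields
  infinitely many trace ideals.\<close>

section \<open>Ideals and trace ideals\<close>

lemma subring_ofD:
  assumes "subring_of R"
  shows "0 \<in> R" "1 \<in> R" "x \<in> R \<Longrightarrow> y \<in> R \<Longrightarrow> x + y \<in> R"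
    "x \<in> R \<Longrightarrow> y \<in> R \<Longrightarrow> x - y \<in> R" "x \<in> R \<Longrightarrow> y \<in> R \<Longrightarrow> x * y \<in> R"
    "x \<in> R \<Longrightarrow> - x \<in> R"
  using assms unfolding subring_of_def by (metis diff_0)+

lemma is_idealD:
  assumes "is_ideal R I"
  shows "I \<subseteq> R" "0 \<in> I" "x \<in> I \<Longrightarrow> y \<in> I \<Longrightarrow> x + y \<in> I" "r \<in> R \<Longrightarrow> x \<in> I \<Longrightarrow> r * x \<in> I"
  using assms unfolding is_ideal_def by auto

lemma ideal_gen_ideal: "is_ideal R K \<Longrightarrow> ideal_gen R K = K"
  unfolding ideal_gen_def by auto

lemma ideal_uminus:
  assumes "subring_of R" "is_ideal R K" "x \<in> K"
  shows "- x \<in> K"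
  using is_idealD(4)[OF assms(2) subring_ofD(6)[OF assms(1) subring_ofD(2)[OF assms(1)]] assms(3)]
  by simp

lemma ideal_diff:
  assumes "subring_of R" "is_ideal R K" "x \<in> K" "y \<in> K"
  shows "x - y \<in> K"
  using is_idealD(3)[OF assms(2) assms(3) ideal_uminus[OF assms(1,2,4)]] by simp

lemma cring_ring_of:
  assumes "subring_of R"
  shows "cring (ring_of R)"
proof (rule cringI)
  note S = subring_ofD[OF assms]
  show "abelian_group (ring_of R)"
  proof (rule abelian_groupI)
    fix x assume "x \<in> carrier (ring_of R)"
    then show "\<exists>y\<in>carrier (ring_of R). y \<oplus>\<^bsub>ring_of R\<^esub> x = \<zero>\<^bsub>ring_of R\<^esub>"
      by (intro bexI[of _ "- x"]) (simp_all add: ring_of_def S)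
  qed (simp_all add: ring_of_def S add.assoc add.commute)
  show "comm_monoid (ring_of R)"
    by (rule comm_monoidI) (simp_all add: ring_of_def S mult.assoc mult.commute)
qed (simp add: ring_of_def distrib_right)

text \<open>The modules in \<^const>\<open>trace_ideals\<close> have elements of type \<^typ>\<open>'a set \<Rightarrow> 'a\<close>;
  an ideal K is represented there by the constant functions with values in K.\<close>

definition ideal_module :: "'a::field set \<Rightarrow> ('a, 'a set \<Rightarrow> 'a) module" where
  "ideal_module K = \<lparr>carrier = (\<lambda>x _. x) ` K, monoid.mult = (\<lambda>f g. f), one = (\<lambda>_. 0),
     zero = (\<lambda>_. 0), add = (\<lambda>f g s. f s + g s), module.smult = (\<lambda>r f s. r * f s)\<rparr>"

lemma ideal_module_simps:
  "carrier (ideal_module K) = (\<lambda>x _. x) ` K"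
  "f \<oplus>\<^bsub>ideal_module K\<^esub> g = (\<lambda>s. f s + g s)"
  "r \<odot>\<^bsub>ideal_module K\<^esub> f = (\<lambda>s. r * f s)"
  by (simp_all add: ideal_module_def)

lemma module_ideal_module:
  assumes R: "subring_of R" and K: "is_ideal R K"
  shows "Module.module (ring_of R) (ideal_module K)"
proof (rule moduleI)
  note I = is_idealD[OF K]
  show "cring (ring_of R)" by (rule cring_ring_of[OF R])
  show "abelian_group (ideal_module K)"
  proof (rule abelian_groupI)
    fix f assume "f \<in> carrier (ideal_module K)"
    then obtain x where "x \<in> K" "f = (\<lambda>_. x)" by (auto simp: ideal_module_def)
    then show "\<exists>g\<in>carrier (ideal_module K). g \<oplus>\<^bsub>ideal_module K\<^esub> f = \<zero>\<^bsub>ideal_module K\<^esub>"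
      by (intro bexI[of _ "\<lambda>_. - x"]) (auto simp: ideal_module_def ideal_uminus[OF R K])
  next
    show "\<zero>\<^bsub>ideal_module K\<^esub> \<in> carrier (ideal_module K)"
      using I(2) by (auto simp: ideal_module_def image_iff)
  qed (auto simp: ideal_module_def I add.assoc add.commute)
qed (auto simp: ideal_module_def ring_of_def is_idealD[OF K] distrib_left distrib_right)

lemma Hom_to_R_ideal_module_mult:
  assumes K: "is_ideal R K" "K \<noteq> {0}" and f: "f \<in> Hom_to_R R (ideal_module K)"
  shows "\<exists>z. \<forall>w\<in>K. f (\<lambda>_. w) = z * w"
proof -
  have lin: "f (\<lambda>_. r * w) = r * f (\<lambda>_. w)" if "r \<in> R" "w \<in> K" for r w
    using f that unfolding Hom_to_R_def by (force simp: ideal_module_simps)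
  obtain y0 where y0: "y0 \<in> K" "y0 \<noteq> 0" using K is_idealD(2) by blast
  have "f (\<lambda>_. w) = f (\<lambda>_. y0) / y0 * w" if "w \<in> K" for w
  proof -
    have "y0 * f (\<lambda>_. w) = f (\<lambda>_. w * y0)"
      using lin[of y0 w] y0 that is_idealD(1)[OF K(1)] by (auto simp: mult.commute)
    also have "\<dots> = w * f (\<lambda>_. y0)" using lin y0 that is_idealD(1)[OF K(1)] by auto
    finally show ?thesis using y0 by (simp add: field_simps)
  qed
  then show ?thesis by blast
qed

text \<open>Under the stability hypothesis, \<open>K\<close> is the trace of the module \<open>K\<close> itself.\<close>

lemma trace_ideals_memI:
  assumes R: "subring_of R" and K: "is_ideal R K" "K \<noteq> {0}"
    and stable: "\<And>z. \<forall>y\<in>K. z * y \<in> R \<Longrightarrow> \<forall>y\<in>K. z * y \<in> K"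
  shows "K \<in> trace_ideals R"
proof -
  have images: "f ` carrier (ideal_module K) \<subseteq> K" if f: "f \<in> Hom_to_R R (ideal_module K)" for f
  proof -
    obtain z where z: "\<forall>w\<in>K. f (\<lambda>_. w) = z * w"
      using Hom_to_R_ideal_module_mult[OF K f] by blast
    have "f (\<lambda>_. y) \<in> R" if "y \<in> K" for y
      using f that unfolding Hom_to_R_def ideal_module_simps by blast
    then have "\<forall>y\<in>K. z * y \<in> R" using z by simp
    then have "\<forall>y\<in>K. f (\<lambda>_. y) \<in> K" using stable z by simp
    then show ?thesis unfolding ideal_module_simps by blast
  qed
  have "(\<lambda>g. g {}) \<in> Hom_to_R R (ideal_module K)"
    using is_idealD(1)[OF K(1)] unfolding Hom_to_R_def ideal_module_simps by auto
  moreover have "(\<lambda>g. g {}) ` carrier (ideal_module K) = K"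
    by (simp add: ideal_module_simps image_image)
  ultimately have "K \<subseteq> (\<Union>f\<in>Hom_to_R R (ideal_module K). f ` carrier (ideal_module K))"
    by (metis UN_upper)
  moreover have "(\<Union>f\<in>Hom_to_R R (ideal_module K). f ` carrier (ideal_module K)) \<subseteq> K"
    by (intro UN_least images)
  ultimately have "(\<Union>f\<in>Hom_to_R R (ideal_module K). f ` carrier (ideal_module K)) = K"
    by (rule equalityI[rotated])
  then have "trace_of R (ideal_module K) = K"
    unfolding trace_of_def using ideal_gen_ideal[OF K(1)] by simp
  then show ?thesis
    unfolding trace_ideals_def using module_ideal_module[OF R K(1)] K(2) by blast
qed

lemma finite_image_if_factors:
  assumes "finite (f ` A)" "\<And>x y. x \<in> A \<Longrightarrow> y \<in> A \<Longrightarrow> f x = f y \<Longrightarrow> g x = g y"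
  shows "finite (g ` A)"
proof -
  have "g ` A \<subseteq> (g \<circ> inv_into A f) ` f ` A"
  proof
    fix t assume "t \<in> g ` A"
    then obtain x where x: "x \<in> A" "t = g x" by blast
    then have "g (inv_into A f (f x)) = g x"
      using assms(2) inv_into_into[of "f x" f A] f_inv_into_f[of "f x" f A] by blast
    then show "t \<in> (g \<circ> inv_into A f) ` f ` A" using x by force
  qed
  then show ?thesis using assms(1) finite_subset by blast
qed

lemma coset_eq_if_diff_mem:
  assumes R: "subring_of R" and M: "is_ideal R M" and d: "x - y \<in> M"
  shows "(\<lambda>t. x + t) ` M = (\<lambda>t. y + t) ` M"
proof -
  have "(\<lambda>t. x + t) ` M \<subseteq> (\<lambda>t. y + t) ` M" if "x - y \<in> M" for x y
  proof
    fix s assume "s \<in> (\<lambda>t. x + t) ` M"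
    then obtain t where "t \<in> M" "s = x + t" by blast
    then show "s \<in> (\<lambda>t. y + t) ` M"
      using is_idealD(3)[OF M that] by (intro image_eqI[of _ _ "x - y + t"]) auto
  qed
  moreover have "y - x \<in> M" using ideal_uminus[OF R M d] by simp
  ultimately show ?thesis using d by blast
qed

lemma ideal_prod_eq_scaled:
  assumes R: "subring_of R" and J: "is_ideal R J" and K: "is_ideal R K" and q: "q \<in> J" "q \<noteq> 0"
    and quotient: "\<And>x y. x \<in> J \<Longrightarrow> y \<in> K \<Longrightarrow> x * y / q \<in> K"
  shows "ideal_prod R J K = (\<lambda>y. q * y) ` K"
proof -
  let ?P = "{x * y |x y. x \<in> J \<and> y \<in> K}" and ?qK = "(\<lambda>y. q * y) ` K"
  have qR: "q \<in> R" using q(1) is_idealD(1)[OF J] by blast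
  have ideal: "is_ideal R ?qK"
    unfolding is_ideal_def
  proof (intro conjI ballI subsetI)
    fix s assume "s \<in> ?qK"
    then show "s \<in> R" using qR is_idealD(1)[OF K] subring_ofD(5)[OF R] by blast
  next
    have "0 = q * 0" by simp
    then show "0 \<in> ?qK" using is_idealD(2)[OF K] by blast
  next
    fix s t assume "s \<in> ?qK" "t \<in> ?qK"
    then obtain s' t' where "s' \<in> K" "t' \<in> K" "s + t = q * (s' + t')"
      by (auto simp: distrib_left)
    then show "s + t \<in> ?qK" using is_idealD(3)[OF K] by blast
  next
    fix r s assume "r \<in> R" "s \<in> ?qK"
    then obtain s' where "s' \<in> K" "r * s = q * (r * s')" by (auto simp: mult.left_commute)
    then show "r * s \<in> ?qK" using is_idealD(4)[OF K \<open>r \<in> R\<close>] by blast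
  qed
  have "?P \<subseteq> ?qK"
  proof
    fix s assume "s \<in> ?P"
    then obtain x y where "x \<in> J" "y \<in> K" "s = q * (x * y / q)" using q(2) by auto
    then show "s \<in> ?qK" using quotient by blast
  qed
  then have "\<Inter>{I. is_ideal R I \<and> ?P \<subseteq> I} \<subseteq> ?qK" using ideal by (intro Inter_lower) simp
  moreover have "?qK \<subseteq> \<Inter>{I. is_ideal R I \<and> ?P \<subseteq> I}" using q(1) by (intro Inter_greatest) blast
  ultimately show ?thesis unfolding ideal_prod_def ideal_gen_def by (rule subset_antisym)
qed

lemma R_subset_integral_closure:
  assumes "subring_of R"
  shows "R \<subseteq> integral_closure R"
proof
  fix r assume r: "r \<in> R"
  have "coeff [:- r, 1:] i \<in> R" for i
    using subring_ofD[OF assms] r by (cases i) (simp_all add: coeff_pCons split: nat.split)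
  then have "integral_over R r" unfolding integral_over_def by (intro exI[of _ "[:- r, 1:]"]) simp
  then show "r \<in> integral_closure R" unfolding integral_closure_def by simp
qed

section \<open>The valuation\<close>

locale valued_ring =
  fixes R :: "'a::field set" and m nn :: "'a set" and v :: "'a \<Rightarrow> int"
  assumes subring: "subring_of R"
    and fraction_field: "is_fraction_field_of R"
    and closure_fin_gen: "fin_gen_module R (integral_closure R)"
    and closure_local: "local_ring (integral_closure R) nn"
    and residue_iso: "residue_map_iso R m (integral_closure R) nn"
    and valuation: "normalized_valuation (integral_closure R) v"
begin

abbreviation Rbar where "Rbar \<equiv> integral_closure R"

lemmas zero_in_R = subring_ofD(1)[OF subring]
  and one_in_R = subring_ofD(2)[OF subring]
  and add_in_R = subring_ofD(3)[OF subring]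
  and diff_in_R = subring_ofD(4)[OF subring]
  and mult_in_R = subring_ofD(5)[OF subring]

lemma sum_in_R: "(\<And>x. x \<in> A \<Longrightarrow> g x \<in> R) \<Longrightarrow> sum g A \<in> R"
  by (induction A rule: infinite_finite_induct) (auto simp: zero_in_R add_in_R)

lemma v_mult: "x \<noteq> 0 \<Longrightarrow> y \<noteq> 0 \<Longrightarrow> v (x * y) = v x + v y"
  using valuation unfolding normalized_valuation_def by blast

lemma v_add: "x \<noteq> 0 \<Longrightarrow> y \<noteq> 0 \<Longrightarrow> x + y \<noteq> 0 \<Longrightarrow> min (v x) (v y) \<le> v (x + y)"
  using valuation unfolding normalized_valuation_def by blast

lemma v_surj: "\<exists>x. x \<noteq> 0 \<and> v x = k"
  using valuation unfolding normalized_valuation_def by blast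

lemma Rbar_iff: "x \<in> Rbar \<longleftrightarrow> x = 0 \<or> 0 \<le> v x"
  using valuation unfolding normalized_valuation_def by blast

lemma v_one [simp]: "v 1 = 0"
  using v_mult[of 1 1] by simp

lemma v_inverse: "x \<noteq> 0 \<Longrightarrow> v (inverse x) = - v x"
  using v_mult[of x "inverse x"] by simp

lemma v_divide: "x \<noteq> 0 \<Longrightarrow> y \<noteq> 0 \<Longrightarrow> v (x / y) = v x - v y"
  by (simp add: divide_inverse v_mult v_inverse)

lemma v_uminus [simp]: "v (- x) = v x"
proof (cases "x = 0")
  case False
  have "v (-1) = 0" using v_mult[of "-1" "-1"] by simp
  then show ?thesis using v_mult[of "-1" x] False by simp
qed simp

lemma v_add_eq_left:
  assumes x: "x \<noteq> 0" and y: "y = 0 \<or> v x < v y"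
  shows "x + y \<noteq> 0 \<and> v (x + y) = v x"
proof (cases "y = 0")
  case False
  have ne: "x + y \<noteq> 0" using y False v_uminus[of x] by (auto simp: add_eq_0_iff)
  have "min (v x) (v y) \<le> v (x + y)" using v_add[OF x False ne] .
  moreover have "min (v (x + y)) (v (- y)) \<le> v (x + y + - y)"
    using v_add[of "x + y" "- y"] ne False x by simp
  ultimately show ?thesis using ne y False by (auto simp: min_def split: if_splits)
qed (use x in simp)

text \<open>\<open>val_ge x k\<close> means \<open>v x \<ge> k\<close> with the convention \<open>v 0 = \<infinity>\<close>
  (the value of \<^term>\<open>v 0\<close> is unspecified).\<close>

definition val_ge :: "'a \<Rightarrow> int \<Rightarrow> bool" where
  "val_ge x k \<longleftrightarrow> x = 0 \<or> k \<le> v x"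

lemma val_ge_0 [simp]: "val_ge 0 k"
  by (simp add: val_ge_def)

lemma val_ge_v: "val_ge x (v x)"
  by (simp add: val_ge_def)

lemma val_ge_mono: "val_ge x k \<Longrightarrow> l \<le> k \<Longrightarrow> val_ge x l"
  by (auto simp: val_ge_def)

lemma val_ge_add: "val_ge x k \<Longrightarrow> val_ge y k \<Longrightarrow> val_ge (x + y) k"
  unfolding val_ge_def using v_add[of x y] by fastforce

lemma val_ge_mult: "val_ge x k \<Longrightarrow> val_ge y l \<Longrightarrow> val_ge (x * y) (k + l)"
  unfolding val_ge_def by (cases "x = 0 \<or> y = 0") (auto simp: v_mult)

lemma val_ge_inverse: "val_ge (inverse x) (- v x)"
  by (cases "x = 0") (simp_all add: val_ge_def v_inverse)

lemma Rbar_iff_val_ge: "x \<in> Rbar \<longleftrightarrow> val_ge x 0"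
  by (simp add: Rbar_iff val_ge_def)

lemma R_val_ge: "r \<in> R \<Longrightarrow> val_ge r 0"
  using R_subset_integral_closure[OF subring] Rbar_iff_val_ge by blast

lemma v_nonneg: "r \<in> R \<Longrightarrow> r \<noteq> 0 \<Longrightarrow> 0 \<le> v r"
  using R_val_ge by (auto simp: val_ge_def)

lemma v_eq_0_if_val_ge_1_diff:
  assumes "val_ge (1 - g) 1"
  shows "g \<noteq> 0" "v g = 0"
proof -
  show "g \<noteq> 0" using assms by (auto simp: val_ge_def)
  have "g - 1 = 0 \<or> v 1 < v (g - 1)"
    using assms v_uminus[of "1 - g"] by (auto simp: val_ge_def)
  then show "v g = 0" using v_add_eq_left[of 1 "g - 1"] by simp
qed

lemma maximal_ideal_val_ge_1: "maximal_ideal Rbar {x. val_ge x 1}"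
  unfolding maximal_ideal_def
proof (intro conjI allI impI)
  have "val_ge x 0" if "val_ge x 1" for x using val_ge_mono[OF that] by simp
  moreover have "val_ge (r * x) 1" if "val_ge r 0" "val_ge x 1" for r x
    using val_ge_mult[OF that] by simp
  ultimately show "is_ideal Rbar {x. val_ge x 1}"
    unfolding is_ideal_def by (auto simp: val_ge_add Rbar_iff_val_ge)
  have "1 \<in> Rbar" "1 \<notin> {x. val_ge x 1}" by (simp_all add: Rbar_iff_val_ge val_ge_def)
  then show "{x. val_ge x 1} \<noteq> Rbar" by blast
  fix J assume J: "is_ideal Rbar J \<and> {x. val_ge x 1} \<subseteq> J"
  show "J = {x. val_ge x 1} \<or> J = Rbar"
  proof (cases "J \<subseteq> {x. val_ge x 1}")
    case False
    then obtain x where x: "x \<in> J" "\<not> val_ge x 1" by blast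
    then have "x \<in> Rbar" using J is_idealD(1) by blast
    then have "x \<noteq> 0" "v x = 0" using x(2) by (auto simp: Rbar_iff val_ge_def)
    then have "inverse x \<in> Rbar" by (simp add: Rbar_iff v_inverse)
    then have "inverse x * x \<in> J" using J x(1) is_idealD(4) by blast
    then have "1 \<in> J" using \<open>x \<noteq> 0\<close> by simp
    then have "Rbar \<subseteq> J" using J is_idealD(4)[of Rbar J _ 1] by fastforce
    then show ?thesis using J is_idealD(1)[of Rbar J] by blast
  qed (use J in blast)
qed

lemma mem_nn_iff: "x \<in> nn \<longleftrightarrow> val_ge x 1"
  using closure_local maximal_ideal_val_ge_1 unfolding local_ring_def by blast

lemma mem_m_iff: "r \<in> R \<Longrightarrow> r \<in> m \<longleftrightarrow> val_ge r 1"
  using residue_iso mem_nn_iff unfolding residue_map_iso_def by blast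

lemma exists_residue: "val_ge x 0 \<Longrightarrow> \<exists>r\<in>R. val_ge (x - r) 1"
  using residue_iso mem_nn_iff Rbar_iff_val_ge unfolding residue_map_iso_def by blast

lemma approx_by_multiple:
  assumes u: "u \<noteq> 0" and x: "val_ge x (v u)"
  shows "\<exists>\<alpha>\<in>R. val_ge (x - \<alpha> * u) (v u + 1)"
proof -
  have "val_ge (x / u) 0" using x u by (cases "x = 0") (auto simp: val_ge_def v_divide)
  then obtain r where r: "r \<in> R" "val_ge (x / u - r) 1" using exists_residue by blast
  have "x - r * u = u * (x / u - r)" using u by (simp add: field_simps)
  then have "val_ge (x - r * u) (v u + 1)" using val_ge_mult[OF val_ge_v r(2)] by simp
  then show ?thesis using r(1) by blast
qed

lemma common_denominator:
  "finite F \<Longrightarrow> \<exists>s\<in>R. s \<noteq> 0 \<and> (\<forall>f\<in>F. s * f \<in> R)"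
proof (induction F rule: finite_induct)
  case empty
  show ?case using one_in_R by (intro bexI[of _ 1]) auto
next
  case (insert f F)
  obtain s where s: "s \<in> R" "s \<noteq> 0" "\<forall>f\<in>F. s * f \<in> R" using insert.IH by blast
  obtain p b where pb: "p \<in> R" "b \<in> R" "b \<noteq> 0" "f = p / b"
    using fraction_field unfolding is_fraction_field_of_def by blast
  have "b * s * f' \<in> R" if "f' \<in> insert f F" for f'
  proof (cases "f' = f")
    case True
    then have "b * s * f' = s * p" using pb by simp
    with mult_in_R[OF s(1) pb(1)] show ?thesis by (simp only:)
  next
    case False
    then show ?thesis using that s(3) pb(2) mult_in_R by (simp add: mult.assoc)
  qed
  moreover have "b * s \<in> R" "b * s \<noteq> 0" using s pb mult_in_R by auto
  ultimately show ?case by blast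
qed

lemma exists_conductor_bound: "\<exists>N. \<forall>x. val_ge x N \<longrightarrow> x \<in> R"
proof -
  obtain F where F: "finite F" "Rbar = {(\<Sum>f\<in>F. c f * f) |c. \<forall>f\<in>F. c f \<in> R}"
    using closure_fin_gen unfolding fin_gen_module_def by blast
  obtain s where s: "s \<in> R" "s \<noteq> 0" "\<forall>f\<in>F. s * f \<in> R" using common_denominator[OF F(1)] by blast
  have sRbar: "s * x \<in> R" if "x \<in> Rbar" for x
  proof -
    have "x \<in> {(\<Sum>f\<in>F. c f * f) |c. \<forall>f\<in>F. c f \<in> R}" using that F(2) by simp
    then obtain c where c: "\<forall>f\<in>F. c f \<in> R" "x = (\<Sum>f\<in>F. c f * f)" by blast
    have "s * x = (\<Sum>f\<in>F. c f * (s * f))" by (simp add: c(2) sum_distrib_left mult.left_commute)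
    also have "\<dots> \<in> R" by (rule sum_in_R) (use c(1) s(3) mult_in_R in blast)
    finally show ?thesis .
  qed
  have "x \<in> R" if "val_ge x (v s)" for x
  proof -
    have "x / s \<in> Rbar"
      using that s(2) by (cases "x = 0") (auto simp: Rbar_iff val_ge_def v_divide)
    then show ?thesis using sRbar[of "x / s"] s(2) by simp
  qed
  then show ?thesis by blast
qed

section \<open>The value semigroup and the ideals \<open>I\<^sub>j\<close>\<close>

abbreviation V where "V \<equiv> value_set R v"
abbreviation a where "a \<equiv> aseq R v"
abbreviation n where "n \<equiv> n_index R v"
abbreviation I where "I \<equiv> Iv R v"

text \<open>\<open>c = a\<^sub>n\<close> is the conductor of the value semigroup \<open>v(R)\<close>.\<close>

abbreviation c where "c \<equiv> a n"

lemma value_set_iff: "k \<in> V \<longleftrightarrow> (\<exists>r\<in>R. r \<noteq> 0 \<and> v r = int k)"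
proof
  assume "k \<in> V"
  then obtain r where r: "r \<in> R" "r \<noteq> 0" "k = nat (v r)" unfolding value_set_def by blast
  then show "\<exists>r\<in>R. r \<noteq> 0 \<and> v r = int k" using v_nonneg[OF r(1,2)] by auto
next
  assume "\<exists>r\<in>R. r \<noteq> 0 \<and> v r = int k"
  then obtain r where "r \<in> R" "r \<noteq> 0" "k = nat (v r)" by force
  then show "k \<in> V" unfolding value_set_def by blast
qed

lemma eventually_in_value_set: "\<exists>N. \<forall>k. N \<le> int k \<longrightarrow> k \<in> V"
proof -
  obtain N where N: "\<forall>x. val_ge x N \<longrightarrow> x \<in> R" using exists_conductor_bound by blast
  have "k \<in> V" if "N \<le> int k" for k
  proof -
    obtain x where x: "x \<noteq> 0" "v x = int k" using v_surj by blast
    then have "x \<in> R" using N that by (simp add: val_ge_def)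
    then show ?thesis using x value_set_iff by blast
  qed
  then show ?thesis by blast
qed

lemma infinite_value_set: "infinite V"
proof -
  obtain N where N: "\<forall>k. N \<le> int k \<longrightarrow> k \<in> V" using eventually_in_value_set by blast
  have "\<exists>k\<ge>j. k \<in> V" for j using N by (intro exI[of _ "max j (nat N)"]) auto
  then show ?thesis unfolding infinite_nat_iff_unbounded_le by blast
qed

lemma a_in_value_set: "a j \<in> V"
  unfolding aseq_def by (rule enumerate_in_set[OF infinite_value_set])

lemma a_less_iff [simp]: "a j < a l \<longleftrightarrow> j < l"
  unfolding aseq_def using infinite_value_set by simp

lemma a_le_iff [simp]: "a j \<le> a l \<longleftrightarrow> j \<le> l"
  unfolding aseq_def using infinite_value_set by simp

lemma in_value_set_imp_ex_a: "k \<in> V \<Longrightarrow> \<exists>j. a j = k"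
  unfolding aseq_def using enumerate_Ex[OF infinite_value_set] by blast

lemma ex_elem_of_value_a: "\<exists>r\<in>R. r \<noteq> 0 \<and> v r = int (a j)"
  using a_in_value_set value_set_iff by blast

lemma v_eq_a:
  assumes "r \<in> R" "r \<noteq> 0"
  shows "\<exists>j. v r = int (a j)"
proof -
  have "nat (v r) \<in> V"
    unfolding value_set_iff using assms v_nonneg[OF assms] by (intro bexI[of _ r]) auto
  then obtain j where "a j = nat (v r)" using in_value_set_imp_ex_a by blast
  then have "v r = int (a j)" using v_nonneg[OF assms] by simp
  then show ?thesis by blast
qed

lemma val_ge_a_Suc:
  assumes "r \<in> R" "val_ge r (int (a j) + 1)"
  shows "val_ge r (int (a (Suc j)))"
proof (cases "r = 0")
  case False
  obtain l where l: "v r = int (a l)" using v_eq_a[OF assms(1) False] by blast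
  then have "int (a j) < int (a l)" using assms(2) False unfolding val_ge_def by linarith
  then have "a (Suc j) \<le> a l" by simp
  then show ?thesis using l by (simp add: val_ge_def)
qed simp

lemma a_eventually_consecutive: "\<exists>n0. \<forall>j. a (n0 + j) = a n0 + j"
proof -
  obtain N where N: "\<forall>k. N \<le> int k \<longrightarrow> k \<in> V" using eventually_in_value_set by blast
  define K where "K = nat N"
  have KV: "K + t \<in> V" for t using N unfolding K_def by simp
  obtain n0 where n0: "a n0 = K" using in_value_set_imp_ex_a[OF KV[of 0]] by auto
  have "a (n0 + j) = K + j" for j
  proof (induction j)
    case (Suc j)
    obtain l where l: "a l = K + Suc j" using in_value_set_imp_ex_a[OF KV] by blast
    then have "a (n0 + j) < a l" using Suc by simp
    then have "a (n0 + Suc j) \<le> a l" by simp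
    moreover have "a (n0 + j) < a (n0 + Suc j)" by simp
    ultimately show ?case using l Suc by simp
  qed (use n0 in simp)
  then show ?thesis using n0 by auto
qed

lemma a_n_add: "a (n + j) = c + j"
  using LeastI_ex[OF a_eventually_consecutive] unfolding n_index_def by blast

lemma in_value_set_if_ge_c: "c \<le> k \<Longrightarrow> k \<in> V"
  using a_n_add[of "k - c"] a_in_value_set[of "n + (k - c)"] by simp

lemma v_ne_c_minus_1:
  assumes "0 < n" "r \<in> R" "r \<noteq> 0"
  shows "v r \<noteq> int c - 1"
proof
  assume vr: "v r = int c - 1"
  obtain l where "v r = int (a l)" using v_eq_a[OF assms(2,3)] by blast
  then have al: "a l + 1 = c" using vr by simp
  then have "l < n" by (metis a_less_iff less_add_one)
  then have "a l \<le> a (n - 1)" by simp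
  moreover have "a (n - 1) < c" using assms(1) by simp
  ultimately have an1: "a (n - 1) + 1 = c" using al by linarith
  have "\<forall>j. a (n - 1 + j) = a (n - 1) + j"
  proof
    fix j show "a (n - 1 + j) = a (n - 1) + j"
    proof (cases j)
      case (Suc t)
      then have "n - 1 + j = n + t" using assms(1) by simp
      then show ?thesis using a_n_add[of t] an1 Suc by simp
    qed simp
  qed
  then have "n \<le> n - 1" unfolding n_index_def by (rule Least_le)
  then show False using assms(1) by simp
qed

lemma in_R_if_val_ge_c:
  assumes "val_ge x (int c)"
  shows "x \<in> R"
proof -
  obtain N where N: "\<forall>x. val_ge x N \<longrightarrow> x \<in> R" using exists_conductor_bound by blast
  have descend: "x \<in> R" if "val_ge x (N - int k)" "val_ge x (int c)" for k x
    using that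
  proof (induction k arbitrary: x)
    case 0
    then show ?case using N by simp
  next
    case (Suc k)
    show ?case
    proof (cases "val_ge x (N - int k)")
      case True
      then show ?thesis using Suc.IH Suc.prems(2) by blast
    next
      case False
      then have x: "x \<noteq> 0" "v x + 1 = N - int k" "int c \<le> v x"
        using Suc.prems by (auto simp: val_ge_def)
      have "nat (v x) \<in> V" using x(3) by (intro in_value_set_if_ge_c) linarith
      then obtain r where r: "r \<in> R" "r \<noteq> 0" "v r = v x" using value_set_iff x(3) by auto
      then obtain \<alpha> where \<alpha>: "\<alpha> \<in> R" "val_ge (x - \<alpha> * r) (v r + 1)"
        using approx_by_multiple[OF r(2)] val_ge_v[of x] by auto
      have "val_ge (x - \<alpha> * r) (N - int k)" using \<alpha>(2) r(3) x(2) by simp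
      moreover have "val_ge (x - \<alpha> * r) (int c)" using \<alpha>(2) by (rule val_ge_mono) (use r(3) x(3) in simp)
      ultimately have "x - \<alpha> * r \<in> R" by (rule Suc.IH)
      then have "x - \<alpha> * r + \<alpha> * r \<in> R" using add_in_R mult_in_R \<alpha>(1) r(1) by blast
      then show ?thesis by simp
    qed
  qed
  have "val_ge x (N - int (nat (N - int c)))" using assms by (rule val_ge_mono) simp
  then show ?thesis using descend assms by blast
qed

lemma mem_I_iff: "y \<in> I j \<longleftrightarrow> y \<in> R \<and> val_ge y (int (a j))"
  unfolding Iv_def val_ge_def by auto

lemma I_subset_R: "I j \<subseteq> R"
  using mem_I_iff by blast

lemma I_antimono: "j \<le> l \<Longrightarrow> I l \<subseteq> I j"
  using val_ge_mono[of _ "int (a l)" "int (a j)"] by (auto simp: mem_I_iff)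

lemma is_ideal_I: "is_ideal R (I j)"
  unfolding is_ideal_def
proof (intro conjI ballI)
  show "I j \<subseteq> R" by (rule I_subset_R)
  show "0 \<in> I j" using zero_in_R by (simp add: mem_I_iff)
  fix x y assume "x \<in> I j" "y \<in> I j"
  then show "x + y \<in> I j" using add_in_R by (simp add: mem_I_iff val_ge_add)
next
  fix r x assume "r \<in> R" "x \<in> I j"
  then show "r * x \<in> I j" using mult_in_R R_val_ge[of r] val_ge_mult[of r 0 x] by (simp add: mem_I_iff)
qed

lemmas add_in_I = is_idealD(3)[OF is_ideal_I]
  and mult_in_I = is_idealD(4)[OF is_ideal_I]

lemmas diff_in_I = ideal_diff[OF subring is_ideal_I]

lemma conductor_in_I: "val_ge x (int c) \<Longrightarrow> j \<le> n \<Longrightarrow> x \<in> I j"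
  using in_R_if_val_ge_c val_ge_mono[of x "int c" "int (a j)"] by (simp add: mem_I_iff)

lemma mult_in_I_Suc:
  assumes e: "val_ge e 1" and y: "y \<in> I l" and ey: "e * y \<in> R"
  shows "e * y \<in> I (Suc l)"
proof -
  have "val_ge y (int (a l))" using y by (simp add: mem_I_iff)
  from val_ge_mult[OF e this] have "val_ge (e * y) (int (a l) + 1)" by (simp add: add.commute)
  then have "val_ge (e * y) (int (a (Suc l)))" by (rule val_ge_a_Suc[OF ey])
  then show ?thesis using ey by (simp add: mem_I_iff)
qed

text \<open>An element of value \<open>c - 1 - v z\<close> shows that \<open>v z < 0\<close> would put \<open>c - 1\<close> into \<open>v(R)\<close>.\<close>

lemma val_ge_0_if_mult_into_R:
  assumes "0 < n" and conductor_subset: "\<And>x. val_ge x (int c) \<Longrightarrow> x \<in> K"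
    and z: "\<forall>y\<in>K. z * y \<in> R"
  shows "val_ge z 0"
proof (rule ccontr)
  assume "\<not> val_ge z 0"
  then have z0: "z \<noteq> 0" and vz: "v z < 0" by (auto simp: val_ge_def)
  obtain y where y: "y \<noteq> 0" "v y = int c - 1 - v z" using v_surj by blast
  then have "val_ge y (int c)" using vz by (simp add: val_ge_def)
  then have "y \<in> K" by (rule conductor_subset)
  then have "z * y \<in> R" using z by blast
  moreover have "z * y \<noteq> 0" "v (z * y) = int c - 1" using z0 y v_mult[OF z0 y(1)] by simp_all
  ultimately show False using v_ne_c_minus_1[OF assms(1)] by blast
qed

lemma I_in_trace_ideals:
  assumes "0 < n" "j \<le> n"
  shows "I j \<in> trace_ideals R"
proof (rule trace_ideals_memI[OF subring is_ideal_I])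
  obtain r where r: "r \<in> R" "r \<noteq> 0" "v r = int (a j)" using ex_elem_of_value_a by blast
  then have "r \<in> I j" by (simp add: mem_I_iff val_ge_def)
  then show "I j \<noteq> {0}" using r(2) by blast
next
  fix z assume z: "\<forall>y\<in>I j. z * y \<in> R"
  have "val_ge z 0" using val_ge_0_if_mult_into_R[OF assms(1) _ z] conductor_in_I[OF _ assms(2)] .
  then show "\<forall>y\<in>I j. z * y \<in> I j" using z val_ge_mult[of z 0] by (auto simp: mem_I_iff)
qed

definition stabilizes :: "nat \<Rightarrow> 'a \<Rightarrow> bool" where
  "stabilizes j t \<longleftrightarrow> (\<forall>y\<in>I j. t * y \<in> I j)"

lemma stabilizes_one: "stabilizes j 1"
  by (simp add: stabilizes_def)

lemma stabilizes_R: "r \<in> R \<Longrightarrow> stabilizes j r"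
  by (simp add: stabilizes_def mult_in_I)

lemma stabilizes_add: "stabilizes j s \<Longrightarrow> stabilizes j t \<Longrightarrow> stabilizes j (s + t)"
  by (simp add: stabilizes_def distrib_right add_in_I)

lemma stabilizes_diff: "stabilizes j s \<Longrightarrow> stabilizes j t \<Longrightarrow> stabilizes j (s - t)"
  by (simp add: stabilizes_def left_diff_distrib diff_in_I)

lemma stabilizes_mult: "stabilizes j s \<Longrightarrow> stabilizes j t \<Longrightarrow> stabilizes j (s * t)"
  by (simp add: stabilizes_def mult.assoc)

lemma stabilizes_if_val_ge_c: "val_ge t (int c) \<Longrightarrow> stabilizes j t"
  unfolding stabilizes_def
proof
  fix y assume t: "val_ge t (int c)" and y: "y \<in> I j"
  have "val_ge y (int (a j))" using y by (simp add: mem_I_iff)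
  from val_ge_mult[OF t this] have ty: "val_ge (t * y) (int c + int (a j))" .
  then have "t * y \<in> R" using in_R_if_val_ge_c val_ge_mono[OF ty] by simp
  moreover have "val_ge (t * y) (int (a j))" using val_ge_mono[OF ty] by simp
  ultimately show "t * y \<in> I j" by (simp add: mem_I_iff)
qed

lemma stabilizes_if_val_ge_1:
  assumes "val_ge z 1" "\<forall>y\<in>I l. z * y \<in> R"
  shows "stabilizes l z"
  unfolding stabilizes_def
proof
  fix y assume "y \<in> I l"
  then have "z * y \<in> I (Suc l)" using mult_in_I_Suc assms by blast
  then show "z * y \<in> I l" using I_antimono[of l "Suc l"] by auto
qed

text \<open>Newton's iteration \<open>s \<mapsto> s + s (1 - g s)\<close> squares the error \<open>1 - g s\<close>.\<close>

lemma exists_stabilizing_approx_inverse: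
  assumes "val_ge (1 - g) 1" "stabilizes j g"
  shows "\<exists>s. stabilizes j s \<and> val_ge (1 - g * s) (int k + 1)"
proof (induction k)
  case 0
  show ?case using assms stabilizes_one by (intro exI[of _ 1]) simp
next
  case (Suc k)
  then obtain s where s: "stabilizes j s" "val_ge (1 - g * s) (int k + 1)" by blast
  define e where "e = 1 - g * s"
  have "stabilizes j e" unfolding e_def by (intro stabilizes_diff stabilizes_one stabilizes_mult assms(2) s(1))
  then have "stabilizes j (s + s * e)" by (intro stabilizes_add stabilizes_mult s(1))
  moreover have "1 - g * (s + s * e) = e * e" unfolding e_def by (simp add: algebra_simps)
  moreover have "val_ge (e * e) (int (Suc k) + 1)"
    using val_ge_mult[OF s(2)[folded e_def] s(2)[folded e_def]] by (rule val_ge_mono) simp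
  ultimately show ?case by (intro exI[of _ "s + s * e"]) simp
qed

lemma stabilizes_inverse:
  assumes g: "val_ge (1 - g) 1" "stabilizes j g"
  shows "stabilizes j (inverse g)"
proof -
  obtain s where s: "stabilizes j s" "val_ge (1 - g * s) (int c + 1)"
    using exists_stabilizing_approx_inverse[OF g, of c] by blast
  define e where "e = 1 - g * s"
  have "val_ge e (int c)" using s(2)[folded e_def] by (rule val_ge_mono) simp
  then have "val_ge (e * inverse g) (int c + - v g)" by (rule val_ge_mult[OF _ val_ge_inverse])
  then have "stabilizes j (e * inverse g)"
    using v_eq_0_if_val_ge_1_diff[OF g(1)] by (intro stabilizes_if_val_ge_c) simp
  then have "stabilizes j (s + e * inverse g)" by (rule stabilizes_add[OF s(1)])
  moreover have "s + e * inverse g = inverse g"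
    unfolding e_def using v_eq_0_if_val_ge_1_diff[OF g(1)] by (simp add: field_simps)
  ultimately show ?thesis by simp
qed

section \<open>Liftable elements\<close>

definition liftable :: "nat \<Rightarrow> 'a \<Rightarrow> bool" where
  "liftable j u \<longleftrightarrow> (\<exists>z. z \<noteq> 0 \<and> v z = int (a (Suc j)) - int (a j) \<and> z * u \<in> R \<and>
     (\<forall>y\<in>I (j + 2). z * y \<in> R))"

definition I_adjoin :: "nat \<Rightarrow> 'a \<Rightarrow> 'a set" where
  "I_adjoin j u = {r * u + y |r y. r \<in> R \<and> y \<in> I (j + 2)}"

lemma I_adjoinI: "r \<in> R \<Longrightarrow> y \<in> I (j + 2) \<Longrightarrow> r * u + y \<in> I_adjoin j u"
  unfolding I_adjoin_def by blast

lemma I_adjoinE: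
  assumes "s \<in> I_adjoin j u"
  obtains r y where "r \<in> R" "y \<in> I (j + 2)" "s = r * u + y"
  using assms unfolding I_adjoin_def by blast

lemma I_subset_I_adjoin: "I (j + 2) \<subseteq> I_adjoin j u"
  using I_adjoinI[OF zero_in_R] by fastforce

lemma mem_I_adjoin_self: "u \<in> I_adjoin j u"
  using I_adjoinI[OF one_in_R is_idealD(2)[OF is_ideal_I]] by simp

lemma is_ideal_I_adjoin:
  assumes u: "u \<in> R"
  shows "is_ideal R (I_adjoin j u)"
  unfolding is_ideal_def
proof (intro conjI ballI subsetI)
  fix s assume "s \<in> I_adjoin j u"
  then obtain r y where "r \<in> R" "y \<in> I (j + 2)" "s = r * u + y" by (rule I_adjoinE)
  then show "s \<in> R" using u add_in_R mult_in_R I_subset_R by blast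
next
  show "0 \<in> I_adjoin j u" using I_subset_I_adjoin is_idealD(2)[OF is_ideal_I] by blast
next
  fix s t assume "s \<in> I_adjoin j u" "t \<in> I_adjoin j u"
  then obtain r y r' y' where "r \<in> R" "y \<in> I (j + 2)" "s = r * u + y"
    and "r' \<in> R" "y' \<in> I (j + 2)" "t = r' * u + y'" by (metis I_adjoinE)
  moreover have "s + t = (r + r') * u + (y + y')" using calculation by (simp add: algebra_simps)
  ultimately show "s + t \<in> I_adjoin j u" using add_in_R add_in_I I_adjoinI by metis
next
  fix r' s assume "r' \<in> R" "s \<in> I_adjoin j u"
  from \<open>s \<in> I_adjoin j u\<close> obtain r y where "r \<in> R" "y \<in> I (j + 2)" "s = r * u + y"
    by (rule I_adjoinE)
  moreover have "r' * s = (r' * r) * u + r' * y" using calculation by (simp add: algebra_simps)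
  ultimately show "r' * s \<in> I_adjoin j u" using \<open>r' \<in> R\<close> mult_in_R mult_in_I I_adjoinI by metis
qed

lemma a_Suc_diff_ge_1: "1 \<le> int (a (Suc j)) - int (a j)"
proof -
  have "a j < a (Suc j)" by simp
  then show ?thesis by linarith
qed

text \<open>An element of value \<open>a\<^sub>j\<^sub>+\<^sub>1\<close> in \<open>Ru + I\<^sub>j\<^sub>+\<^sub>2\<close> must be \<open>ru + y\<close> with \<open>v r = a\<^sub>j\<^sub>+\<^sub>1 - a\<^sub>j\<close>,
  and such an \<open>r \<in> R\<close> lifts \<open>u\<close>.\<close>

lemma I_adjoin_no_value:
  assumes nl: "\<not> liftable j u" and u: "u \<in> R" "u \<noteq> 0" "v u = int (a j)"
    and s: "s \<in> I_adjoin j u" "s \<noteq> 0"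
  shows "v s \<noteq> int (a (Suc j))"
proof
  assume vs: "v s = int (a (Suc j))"
  obtain r y where r: "r \<in> R" and y: "y \<in> I (j + 2)" and s_eq: "s = r * u + y"
    using s(1) by (rule I_adjoinE)
  have "- y = 0 \<or> v s < v (- y)"
  proof (cases "y = 0")
    case False
    then have "int (a (j + 2)) \<le> v y" using y by (simp add: mem_I_iff val_ge_def)
    moreover have "int (a (Suc j)) < int (a (j + 2))" by simp
    ultimately have "v s < v y" using vs by linarith
    then show ?thesis by simp
  qed simp
  then have st: "s + - y \<noteq> 0 \<and> v (s + - y) = v s" by (rule v_add_eq_left[OF s(2)])
  have ru: "r * u = s + - y" using s_eq by simp
  then have r0: "r \<noteq> 0" using st by auto
  then have "v r = int (a (Suc j)) - int (a j)" using v_mult[OF r0 u(2)] ru st vs u(3) by simp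
  moreover have "r * u \<in> R" "\<forall>y\<in>I (j + 2). r * y \<in> R" using r u(1) mult_in_R I_subset_R by auto
  ultimately show False using nl r0 unfolding liftable_def by blast
qed

lemma mult_I_adjoin_if_val_ge_1:
  assumes nl: "\<not> liftable j u" and u: "u \<in> R" "u \<noteq> 0" "v u = int (a j)"
    and e: "val_ge e 1" and eR: "\<forall>y\<in>I_adjoin j u. e * y \<in> R" and s: "s \<in> I_adjoin j u"
  shows "e * s \<in> I (j + 2)"
proof -
  have eI: "e * y \<in> I (j + 2)" if "y \<in> I (j + 2)" for y
  proof -
    have "e * y \<in> R" using eR that I_subset_I_adjoin by blast
    then have "e * y \<in> I (Suc (j + 2))" by (rule mult_in_I_Suc[OF e that])
    then show ?thesis using I_antimono[of "j + 2" "Suc (j + 2)"] by auto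
  qed
  have euR: "e * u \<in> R" using eR mem_I_adjoin_self by blast
  have eu: "e * u \<in> I (j + 2)"
  proof (rule ccontr)
    assume not_I: "e * u \<notin> I (j + 2)"
    have "u \<in> I j" using u by (simp add: mem_I_iff val_ge_def)
    then have "e * u \<in> I (Suc j)" using mult_in_I_Suc[OF e _ euR] by blast
    moreover have "\<not> val_ge (e * u) (int (a (Suc j)) + 1)"
      using not_I euR val_ge_a_Suc[OF euR] by (auto simp: mem_I_iff)
    ultimately have "e * u \<noteq> 0" "v (e * u) = int (a (Suc j))"
      by (auto simp: mem_I_iff val_ge_def)
    then have e0: "e \<noteq> 0" and "v e = int (a (Suc j)) - int (a j)"
      using v_mult[of e u] u(2,3) by auto
    moreover have "\<forall>y\<in>I (j + 2). e * y \<in> R" using eI I_subset_R by blast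
    ultimately show False using nl euR unfolding liftable_def by blast
  qed
  obtain r y where r: "r \<in> R" and y: "y \<in> I (j + 2)" and s_eq: "s = r * u + y"
    using s by (rule I_adjoinE)
  have "e * s = r * (e * u) + e * y" unfolding s_eq by (simp add: algebra_simps)
  then show ?thesis using add_in_I mult_in_I r eu eI[OF y] by simp
qed

text \<open>If \<open>z (Ru + I\<^sub>j\<^sub>+\<^sub>2) \<subseteq> R\<close> then \<open>v z \<ge> 0\<close>, so \<open>z = \<alpha> + e\<close> with \<open>\<alpha> \<in> R\<close> and \<open>v e \<ge> 1\<close>.\<close>

lemma I_adjoin_in_trace_ideals:
  assumes n0: "0 < n" and jn: "j + 2 \<le> n" and u: "u \<in> R" "u \<noteq> 0" "v u = int (a j)"
    and nl: "\<not> liftable j u"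
  shows "I_adjoin j u \<in> trace_ideals R"
proof (rule trace_ideals_memI[OF subring is_ideal_I_adjoin[OF u(1)]])
  show "I_adjoin j u \<noteq> {0}" using mem_I_adjoin_self[of u j] u(2) by blast
next
  fix z assume zK: "\<forall>y\<in>I_adjoin j u. z * y \<in> R"
  note K = is_idealD[OF is_ideal_I_adjoin[OF u(1), of j]]
  have "val_ge z 0"
    using val_ge_0_if_mult_into_R[OF n0 _ zK] conductor_in_I[OF _ jn] I_subset_I_adjoin by blast
  then obtain \<alpha> where \<alpha>: "\<alpha> \<in> R" "val_ge (z - \<alpha>) 1" using exists_residue by blast
  have "\<forall>y\<in>I_adjoin j u. (z - \<alpha>) * y \<in> R"
  proof
    fix y assume "y \<in> I_adjoin j u"
    then have "z * y - \<alpha> * y \<in> R" using zK \<alpha>(1) K(1) diff_in_R mult_in_R by blast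
    then show "(z - \<alpha>) * y \<in> R" by (simp add: left_diff_distrib)
  qed
  note e = mult_I_adjoin_if_val_ge_1[OF nl u \<alpha>(2) this]
  show "\<forall>s\<in>I_adjoin j u. z * s \<in> I_adjoin j u"
  proof
    fix s assume s: "s \<in> I_adjoin j u"
    have "z * s = \<alpha> * s + (z - \<alpha>) * s" by (simp add: algebra_simps)
    moreover have "(z - \<alpha>) * s \<in> I_adjoin j u" using e s I_subset_I_adjoin by blast
    moreover have "\<alpha> * s \<in> I_adjoin j u" using K(4) \<alpha>(1) s by blast
    ultimately show "z * s \<in> I_adjoin j u" using K(3) by metis
  qed
qed

lemma I_adjoin_notin_I_family:
  assumes u: "u \<in> R" "u \<noteq> 0" "v u = int (a j)" and nl: "\<not> liftable j u"
  shows "I_adjoin j u \<notin> I_family R v"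
proof
  assume "I_adjoin j u \<in> I_family R v"
  then obtain l where l: "I_adjoin j u = I l" unfolding I_family_def by blast
  show False
  proof (cases "l \<le> Suc j")
    case True
    obtain w where w: "w \<in> R" "w \<noteq> 0" "v w = int (a (Suc j))" using ex_elem_of_value_a by blast
    then have "w \<in> I l" using True by (simp add: mem_I_iff val_ge_def)
    then show False using I_adjoin_no_value[OF nl u _ w(2)] l w(3) by blast
  next
    case False
    have "u \<in> I l" using mem_I_adjoin_self l by blast
    then have "a l \<le> a j" using u(2,3) by (simp add: mem_I_iff val_ge_def)
    then show False using False by simp
  qed
qed

lemma shift_value:
  assumes u: "u \<in> R" "u \<noteq> 0" "v u = int (a j)" and mu: "\<mu> \<in> R"
    and w: "w \<in> R" "val_ge w (int (a (Suc j)))"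
  shows "u + \<mu> * w \<in> R" "u + \<mu> * w \<noteq> 0" "v (u + \<mu> * w) = int (a j)"
proof -
  show "u + \<mu> * w \<in> R" using u(1) mu w(1) add_in_R mult_in_R by blast
  have "\<mu> * w = 0 \<or> v u < v (\<mu> * w)"
  proof (cases "\<mu> * w = 0")
    case False
    then have "int (a (Suc j)) \<le> v (\<mu> * w)"
      using val_ge_mult[OF R_val_ge[OF mu] w(2)] by (simp add: val_ge_def)
    moreover have "int (a j) < int (a (Suc j))" by simp
    ultimately have "v u < v (\<mu> * w)" using u(3) by linarith
    then show ?thesis by simp
  qed simp
  then show "u + \<mu> * w \<noteq> 0" "v (u + \<mu> * w) = int (a j)"
    using v_add_eq_left[OF u(2)] u(3) by auto
qed

text \<open>If \<open>z\<close> lifts \<open>u + \<mu>w\<close>, split \<open>\<mu>w = \<beta> r + y\<close> along \<open>r = z (u + \<mu>w)\<close> with \<open>y \<in> I\<^sub>j\<^sub>+\<^sub>2\<close>;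
  then \<open>z u = r (1 - \<beta> z) - z y\<close>, so \<open>z / (1 - \<beta> z)\<close> lifts \<open>u\<close>.\<close>

lemma liftable_shift:
  assumes u: "u \<in> R" "u \<noteq> 0" "v u = int (a j)" and mu: "\<mu> \<in> R"
    and w: "w \<in> R" "val_ge w (int (a (Suc j)))" and lift: "liftable j (u + \<mu> * w)"
  shows "liftable j u"
proof -
  note u' = shift_value[OF u mu w]
  obtain z where z: "z \<noteq> 0" "v z = int (a (Suc j)) - int (a j)" "z * (u + \<mu> * w) \<in> R"
    "\<forall>y\<in>I (j + 2). z * y \<in> R"
    using lift unfolding liftable_def by blast
  define r where "r = z * (u + \<mu> * w)"
  have r: "r \<in> R" "r \<noteq> 0" "v r = int (a (Suc j))"
    using z u' v_mult[OF z(1) u'(2)] unfolding r_def by simp_all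
  have "val_ge (\<mu> * w) (v r)" using val_ge_mult[OF R_val_ge[OF mu] w(2)] r(3) by simp
  then obtain \<beta> where \<beta>: "\<beta> \<in> R" "val_ge (\<mu> * w - \<beta> * r) (int (a (Suc j)) + 1)"
    using approx_by_multiple[OF r(2)] r(3) by auto
  define y where "y = \<mu> * w - \<beta> * r"
  have "y \<in> R" unfolding y_def using mu w(1) \<beta>(1) r(1) mult_in_R diff_in_R by blast
  then have yI: "y \<in> I (j + 2)" using val_ge_a_Suc[OF _ \<beta>(2)[folded y_def]] by (simp add: mem_I_iff)
  have z1: "val_ge z 1" using z(2) a_Suc_diff_ge_1[of j] by (simp add: val_ge_def)
  note Pz = stabilizes_if_val_ge_1[OF z1 z(4)]
  define g where "g = 1 - \<beta> * z"
  have g1: "val_ge (1 - g) 1" unfolding g_def using val_ge_mult[OF R_val_ge[OF \<beta>(1)] z1] by simp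
  have "stabilizes (j + 2) g"
    unfolding g_def by (intro stabilizes_diff stabilizes_one stabilizes_mult stabilizes_R \<beta>(1) Pz)
  then have zg: "stabilizes (j + 2) (z * inverse g)"
    by (intro stabilizes_mult Pz stabilizes_inverse[OF g1])
  note g = v_eq_0_if_val_ge_1_diff[OF g1]
  have "z * u = r * g - z * y" unfolding r_def g_def y_def by (simp add: algebra_simps)
  then have "z * inverse g * u = r - z * inverse g * y" using g(1) by (simp add: field_simps)
  moreover have "z * inverse g * y \<in> R" using zg yI I_subset_R unfolding stabilizes_def by blast
  ultimately have "z * inverse g * u \<in> R" using diff_in_R[OF r(1)] by simp
  moreover have "\<forall>y\<in>I (j + 2). z * inverse g * y \<in> R" using zg I_subset_R unfolding stabilizes_def by blast
  moreover have "z * inverse g \<noteq> 0" "v (z * inverse g) = int (a (Suc j)) - int (a j)"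
    using z g v_mult[OF z(1)] v_inverse[OF g(1)] by simp_all
  ultimately show ?thesis unfolding liftable_def by blast
qed

lemma val_ge_1_if_I_adjoin_eq:
  assumes u: "u \<in> R" "u \<noteq> 0" "v u = int (a j)" and nl: "\<not> liftable j u"
    and mu: "\<mu> \<in> R" and nu: "\<nu> \<in> R" and w: "w \<in> R" "w \<noteq> 0" "v w = int (a (Suc j))"
    and eq: "I_adjoin j (u + \<mu> * w) = I_adjoin j (u + \<nu> * w)"
  shows "val_ge (\<mu> - \<nu>) 1"
proof (cases "\<mu> - \<nu> = 0")
  case False
  have wv: "val_ge w (int (a (Suc j)))" using w(3) by (simp add: val_ge_def)
  define u' where "u' = u + \<nu> * w"
  note u' = shift_value[OF u nu w(1) wv, folded u'_def]
  have nl': "\<not> liftable j u'" using liftable_shift[OF u nu w(1) wv] nl unfolding u'_def by blast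
  have "u + \<mu> * w \<in> I_adjoin j u'" using eq mem_I_adjoin_self unfolding u'_def by metis
  then have "u + \<mu> * w - u' \<in> I_adjoin j u'"
    by (rule ideal_diff[OF subring is_ideal_I_adjoin[OF u'(1)] _ mem_I_adjoin_self])
  moreover have "u + \<mu> * w - u' = (\<mu> - \<nu>) * w" unfolding u'_def by (simp add: algebra_simps)
  ultimately have "v ((\<mu> - \<nu>) * w) \<noteq> int (a (Suc j))"
    using I_adjoin_no_value[OF nl' u'] False w(2) by simp
  then have "v (\<mu> - \<nu>) \<noteq> 0" using v_mult[OF False w(2)] w(3) by simp
  then show ?thesis using v_nonneg[OF diff_in_R[OF mu nu] False] by (simp add: val_ge_def)
qed simp

lemma exists_quotient_notin_R:
  assumes q: "q \<in> R" "q \<noteq> 0" "v q = int (a i)"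
    and ne: "ideal_prod R (I i) (I (i + 2)) \<noteq> (\<lambda>x. q * x) ` I (i + 2)"
  shows "\<exists>x\<in>I i. \<exists>y\<in>I (i + 2). x * y / q \<notin> R"
proof (rule ccontr)
  assume "\<not> ?thesis"
  then have R: "x * y / q \<in> R" if "x \<in> I i" "y \<in> I (i + 2)" for x y using that by blast
  have "x * y / q \<in> I (i + 2)" if x: "x \<in> I i" and y: "y \<in> I (i + 2)" for x y
  proof -
    have "val_ge (x * y * inverse q) (int (a i) + int (a (i + 2)) + - v q)"
      using val_ge_mult[OF val_ge_mult val_ge_inverse] x y by (simp add: mem_I_iff)
    then show ?thesis using R[OF x y] q(3) by (simp add: mem_I_iff divide_inverse)
  qed
  moreover have "q \<in> I i" using q by (simp add: mem_I_iff val_ge_def)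
  ultimately have "ideal_prod R (I i) (I (i + 2)) = (\<lambda>x. q * x) ` I (i + 2)"
    by (intro ideal_prod_eq_scaled[OF subring is_ideal_I is_ideal_I _ q(2)])
  then show False using ne by blast
qed

text \<open>Descending induction from the conductor: \<open>I\<^sub>l = R u + I\<^sub>l\<^sub>+\<^sub>1\<close> for any \<open>u\<close> of value \<open>a\<^sub>l\<close>.\<close>

lemma I_mult_into_R:
  assumes "i \<le> n"
    and top: "\<And>x. val_ge x (int c) \<Longrightarrow> x * t \<in> R"
    and gen: "\<And>l. i \<le> l \<Longrightarrow> l < n \<Longrightarrow> \<exists>u\<in>R. u \<noteq> 0 \<and> v u = int (a l) \<and> u * t \<in> R"
  shows "\<forall>x\<in>I i. x * t \<in> R"
  using assms(1)
proof (induction rule: inc_induct)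
  case base
  show ?case using top by (simp add: mem_I_iff)
next
  case (step l)
  obtain u where u: "u \<in> R" "u \<noteq> 0" "v u = int (a l)" "u * t \<in> R" using gen step.hyps by blast
  show ?case
  proof
    fix x assume x: "x \<in> I l"
    then have "val_ge x (v u)" using u(3) by (simp add: mem_I_iff)
    then obtain \<alpha> where \<alpha>: "\<alpha> \<in> R" "val_ge (x - \<alpha> * u) (v u + 1)"
      using approx_by_multiple[OF u(2)] by blast
    have "x - \<alpha> * u \<in> R" using x \<alpha>(1) u(1) I_subset_R diff_in_R mult_in_R by blast
    then have "x - \<alpha> * u \<in> I (Suc l)" using val_ge_a_Suc \<alpha>(2) u(3) by (simp add: mem_I_iff)
    then have "(x - \<alpha> * u) * t \<in> R" using step.IH by blast
    moreover have "\<alpha> * (u * t) \<in> R" using \<alpha>(1) u(4) mult_in_R by blast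
    moreover have "x * t = \<alpha> * (u * t) + (x - \<alpha> * u) * t" by (simp add: algebra_simps)
    ultimately show "x * t \<in> R" using add_in_R by metis
  qed
qed

lemma lift_chain:
  assumes all_liftable: "\<And>l u. l + 2 \<le> n \<Longrightarrow> u \<in> R \<Longrightarrow> u \<noteq> 0 \<Longrightarrow> v u = int (a l) \<Longrightarrow> liftable l u"
    and q: "q \<in> R" "q \<noteq> 0" "v q = int (a i)"
  shows "i + k + 1 \<le> n \<Longrightarrow>
    \<exists>u\<in>R. u \<noteq> 0 \<and> v u = int (a (i + k)) \<and> (\<forall>y\<in>I (i + 2). u / q * y \<in> I (i + k + 2))"
proof (induction k)
  case 0
  show ?case using q by (intro bexI[of _ q]) simp_all
next
  case (Suc k)
  then have "i + k + 1 \<le> n" by simp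
  then obtain u where u: "u \<in> R" "u \<noteq> 0" "v u = int (a (i + k))"
    "\<forall>y\<in>I (i + 2). u / q * y \<in> I (i + k + 2)" using Suc.IH by blast
  have "liftable (i + k) u" using all_liftable Suc.prems u(1-3) by simp
  then obtain z where z: "z \<noteq> 0" "v z = int (a (Suc (i + k))) - int (a (i + k))" "z * u \<in> R"
    "\<forall>y\<in>I (i + k + 2). z * y \<in> R"
    unfolding liftable_def by blast
  have z1: "val_ge z 1" using z(2) a_Suc_diff_ge_1[of "i + k"] by (simp add: val_ge_def)
  have "z * u / q * y \<in> I (i + Suc k + 2)" if "y \<in> I (i + 2)" for y
  proof -
    have "u / q * y \<in> I (i + k + 2)" using u(4) that by blast
    then have "z * (u / q * y) \<in> I (Suc (i + k + 2))" using mult_in_I_Suc[OF z1] z(4) by blast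
    then show ?thesis by (simp add: mult.assoc)
  qed
  moreover have "z * u \<noteq> 0" "v (z * u) = int (a (i + Suc k))"
    using z(1,2) u(2,3) v_mult[OF z(1) u(2)] by simp_all
  ultimately show ?case using z(3) by blast
qed

text \<open>If every element of value \<open>a\<^sub>l\<close> could be lifted, chaining the lifts starting from \<open>q\<close>
  would give \<open>I\<^sub>i I\<^sub>i\<^sub>+\<^sub>2 \<subseteq> q R\<close>.\<close>

lemma exists_nonliftable:
  assumes "i \<le> n" and q: "q \<in> R" "q \<noteq> 0" "v q = int (a i)"
    and x: "x \<in> I i" and y: "y \<in> I (i + 2)" and notin: "x * y / q \<notin> R"
  shows "\<exists>j u. j + 2 \<le> n \<and> u \<in> R \<and> u \<noteq> 0 \<and> v u = int (a j) \<and> \<not> liftable j u"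
proof (rule ccontr)
  assume "\<not> ?thesis"
  then have all_liftable: "\<And>l u. l + 2 \<le> n \<Longrightarrow> u \<in> R \<Longrightarrow> u \<noteq> 0 \<Longrightarrow> v u = int (a l) \<Longrightarrow> liftable l u"
    by blast
  have "\<forall>x\<in>I i. x * (y / q) \<in> R"
  proof (rule I_mult_into_R[OF \<open>i \<le> n\<close>])
    fix x' assume "val_ge x' (int c)"
    moreover have "val_ge (y / q) (int (a (i + 2)) - int (a i))"
      using val_ge_mult[OF _ val_ge_inverse, of y "int (a (i + 2))" q] y q(3)
      by (simp add: mem_I_iff divide_inverse)
    ultimately have "val_ge (x' * (y / q)) (int c + (int (a (i + 2)) - int (a i)))" by (rule val_ge_mult)
    moreover have "int c \<le> int c + (int (a (i + 2)) - int (a i))" by simp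
    ultimately show "x' * (y / q) \<in> R" by (rule in_R_if_val_ge_c[OF val_ge_mono])
  next
    fix l assume l: "i \<le> l" "l < n"
    then have il: "i + (l - i) + 1 \<le> n" "i + (l - i) = l" by simp_all
    have "\<exists>u\<in>R. u \<noteq> 0 \<and> v u = int (a (i + (l - i))) \<and>
        (\<forall>y\<in>I (i + 2). u / q * y \<in> I (i + (l - i) + 2))"
      by (rule lift_chain[OF _ q]) (fact all_liftable, fact il(1))
    then obtain u where u: "u \<in> R" "u \<noteq> 0" "v u = int (a l)" "\<forall>y\<in>I (i + 2). u / q * y \<in> I (l + 2)"
      using il(2) by auto
    then have "u * (y / q) \<in> R" using y I_subset_R by auto
    then show "\<exists>u\<in>R. u \<noteq> 0 \<and> v u = int (a l) \<and> u * (y / q) \<in> R" using u by blast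
  qed
  then have "x * (y / q) \<in> R" using x by blast
  then show False using notin by simp
qed

lemma I_family_psubset_trace_ideals:
  assumes n0: "0 < n" and jn: "j + 2 \<le> n" and u: "u \<in> R" "u \<noteq> 0" "v u = int (a j)"
    and nl: "\<not> liftable j u"
  shows "I_family R v \<subset> trace_ideals R"
proof -
  have "I_family R v \<subseteq> trace_ideals R"
    using I_in_trace_ideals[OF n0] unfolding I_family_def by blast
  moreover have "I_adjoin j u \<in> trace_ideals R - I_family R v"
    using I_adjoin_in_trace_ideals[OF n0 jn u nl] I_adjoin_notin_I_family[OF u nl] by blast
  ultimately show ?thesis by blast
qed

text \<open>The ideals \<open>R (u + \<mu> w) + I\<^sub>j\<^sub>+\<^sub>2\<close>, \<open>v w = a\<^sub>j\<^sub>+\<^sub>1\<close>, are trace ideals that separate the residue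
  classes of \<open>\<mu> \<in> R\<close>.\<close>

lemma infinite_trace_ideals:
  assumes m: "is_ideal R m" and k: "infinite (residue_field R m)"
    and n0: "0 < n" and jn: "j + 2 \<le> n" and u: "u \<in> R" "u \<noteq> 0" "v u = int (a j)"
    and nl: "\<not> liftable j u"
  shows "infinite (trace_ideals R)"
proof
  assume fin: "finite (trace_ideals R)"
  obtain w where w: "w \<in> R" "w \<noteq> 0" "v w = int (a (Suc j))" using ex_elem_of_value_a by blast
  have wv: "val_ge w (int (a (Suc j)))" using w(3) by (simp add: val_ge_def)
  define J where "J \<mu> = I_adjoin j (u + \<mu> * w)" for \<mu>
  have "J \<mu> \<in> trace_ideals R" if "\<mu> \<in> R" for \<mu>
  proof -
    have "\<not> liftable j (u + \<mu> * w)" using liftable_shift[OF u that w(1) wv] nl by blast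
    then show ?thesis
      unfolding J_def by (rule I_adjoin_in_trace_ideals[OF n0 jn shift_value[OF u that w(1) wv]])
  qed
  then have "J ` R \<subseteq> trace_ideals R" by blast
  then have "finite (J ` R)" using fin by (rule finite_subset)
  then have "finite ((\<lambda>\<mu>. (\<lambda>t. \<mu> + t) ` m) ` R)"
  proof (rule finite_image_if_factors)
    fix \<mu> \<nu> assume \<mu>\<nu>: "\<mu> \<in> R" "\<nu> \<in> R" and "J \<mu> = J \<nu>"
    then have "val_ge (\<mu> - \<nu>) 1"
      using val_ge_1_if_I_adjoin_eq[OF u nl \<mu>\<nu> w] unfolding J_def by blast
    then have "\<mu> - \<nu> \<in> m" using mem_m_iff[OF diff_in_R[OF \<mu>\<nu>]] by simp
    then show "(\<lambda>t. \<mu> + t) ` m = (\<lambda>t. \<nu> + t) ` m" by (rule coset_eq_if_diff_mem[OF subring m])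
  qed
  then show False using k unfolding residue_field_def by simp
qed

end

theorem corollary3p7:
  fixes R m :: "'a::field set" and nn :: "'a set" and v :: "'a \<Rightarrow> int"
  assumes subR: "subring_of R"
    and QR: "is_fraction_field_of R"
    and noeth: "noetherian R"
    and loc: "local_ring R m"
    and dim1: "krull_dim_eq R 1"
    and anirr: "analytically_irreducible R m"
    and fg: "fin_gen_module R (integral_closure R)"
    and locbar: "local_ring (integral_closure R) nn"
    and iso: "residue_map_iso R m (integral_closure R) nn"
    and val: "normalized_valuation (integral_closure R) v"
    and n4: "n_index R v \<ge> 4"
    and hyp: "\<exists>i. 1 \<le> i \<and> i \<le> n_index R v - 3 \<and>
               (\<exists>q\<in>R. q \<noteq> 0 \<and> v q = int (aseq R v i) \<and>
                  ideal_prod R (Iv R v i) (Iv R v (i + 2)) \<noteq> (\<lambda>x. q * x) ` Iv R v (i + 2))"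
  shows "I_family R v \<subset> trace_ideals R \<and>
         (infinite (residue_field R m) \<longrightarrow> infinite (trace_ideals R))"
proof -
  interpret valued_ring R m nn v
    using subR QR fg locbar iso val by unfold_locales
  obtain i q where i: "i \<le> n - 3" and q: "q \<in> R" "q \<noteq> 0" "v q = int (a i)"
    and ne: "ideal_prod R (I i) (I (i + 2)) \<noteq> (\<lambda>x. q * x) ` I (i + 2)"
    using hyp by blast
  obtain x y where xy: "x \<in> I i" "y \<in> I (i + 2)" "x * y / q \<notin> R"
    using exists_quotient_notin_R[OF q ne] by blast
  have "i \<le> n" using i by simp
  then obtain j u where nonliftable: "j + 2 \<le> n" "u \<in> R" "u \<noteq> 0" "v u = int (a j)" "\<not> liftable j u"
    using exists_nonliftable[OF _ q xy] by blast
  have n0: "0 < n" using n4 by simp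
  have m: "is_ideal R m" using loc unfolding local_ring_def maximal_ideal_def by blast
  show ?thesis
    using I_family_psubset_trace_ideals[OF n0 nonliftable] infinite_trace_ideals[OF m _ n0 nonliftable]
    by blast
qed

end
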